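(* Consider the linear structural equation model described in the context. Suppose that either Assumption A or Assumption A$'$ holds. If $\beta_{X\to Y}\beta_{Y\to X}=0$, then $(\beta_{X\to Y},\beta_{Y\to X})$ is identifiable, i.e. uniquely determined by the joint distribution of the observed variables $(X_i,Y_i,Z_i)$.
   Context: Observations $(X_i,Y_i,Z_i,U_i)$, $i=1,\dots,n$, are i.i.d.; $X_i,Y_i\in\mathbb{R}$ are observed with finite variance, $Z_i\in\mathbb{R}^p$ is an observed vector of candidate instruments, $U_i$ is unobserved. Assume $E(X_i)=E(Y_i)=0$, $E(Z_i)=0$, and $\Sigma=E(Z_iZ_i^{T})$ invertible. The data satisfy $$Y_i=\beta_{X\to Y}X_i+\pi_Y^{T}Z_i+\xi_Y(U_i)+\zeta_i,\qquad X_i=\beta_{Y\to X}Y_i+\pi_X^{T}Z_i+\xi_X(U_i)+\eta_i,$$ with $\pi_X,\pi_Y\in\mathbb{R}^p$, mean-zero functions $\xi_Y(U_i),\xi_X(U_i)$, $Z_i$ independent of $U_i$, and $E(\zeta_i\mid\eta_i,Z_i,U_i)=E(\eta_i\mid\zeta_i,Z_i,U_i)=0$. The matrix $B=\begin{pmatrix}0&\beta_{X\to Y}\\ \beta_{Y\to X}&0\end{pmatrix}$ has spectral norm $<1$, and $(Y_i,X_i)^T=(I-B)^{-1}\{(\pi_Y^TZ_i,\pi_X^TZ_i)^T+(R_{Y,i},R_{X,i})^T\}$ where $R_{Y,i}=\xi_Y(U_i)+\zeta_i$, $R_{X,i}=\xi_X(U_i)+\eta_i$. Then $E(Y_i\mid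 Z_i)=\gamma_Y^TZ_i$, $E(X_i\mid Z_i)=\gamma_X^TZ_i$ with $\gamma_Y=(\pi_Y+\beta_{X\to Y}\pi_X)/(1-\beta_{X\to Y}\beta_{Y\to X})$, $\gamma_X=(\pi_X+\beta_{Y\to X}\pi_Y)/(1-\beta_{X\to Y}\beta_{Y\to X})$. Sets: $\mathcal{V}_{X\to Y}=\{j:\pi_{X,j}\neq0,\pi_{Y,j}=0\}$, $\mathcal{V}_{Y\to X}=\{j:\pi_{Y,j}\neq0,\pi_{X,j}=0\}$, $\mathcal{V}_{pl}=\{j:\pi_{X,j}\neq0,\pi_{Y,j}\neq0\}$, $\mathcal{S}_X=\{j:\gamma_{X,j}\neq0\}$, $\mathcal{S}_Y=\{j:\gamma_{Y,j}\neq0\}$. Maxima over empty collections are $0$; $\mathbb{1}$ is the indicator. Assumption A: $|\mathcal{V}_{X\to Y}|>\max\big(\max_c|\{j\in\mathcal{V}_{pl}\cap\mathcal{S}_X:\pi_{Y,j}/\gamma_{X,j}=c\}|,\ |\mathcal{V}_{Y\to X}|\mathbb{1}(\beta_{Y\to X}\neq0),\ |\mathcal{V}_{pl}\setminus\mathcal{S}_X|\mathbb{1}(\beta_{Y\to X}\neq0)\big)$, and $\mathrm{Cov}(Y_iR_{Y,i},Z_i)\neq0$. Assumption A$'$: $|\mathcal{V}_{Y\to X}|>\max\big(\max_c|\{j\in\mathcal{V}_{pl}\cap\mathcal{S}_Y:\pi_{X,j}/\gamma_{Y,j}=c\}|,\ |\mathcal{V}_{X\to Y}|\mathbb{1}(\beta_{X\to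 Y}\neq0),\ |\mathcal{V}_{pl}\setminus\mathcal{S}_Y|\mathbb{1}(\beta_{X\to Y}\neq0)\big)$, and $\mathrm{Cov}(X_iR_{X,i},Z_i)\neq0$. *)

theory Defs
  imports "HOL-Probability.Probability"
begin

text \<open>Observations are i.i.d., so the joint law of the sample is determined by (and determines)
  the law of a single observation; we therefore model one generic observation.\<close>

definition Bmat :: "real \<Rightarrow> real \<Rightarrow> real^2^2" where
  "Bmat bxy byx = vector [vector [0, bxy], vector [byx, 0]]"

definition spec_norm :: "real^2^2 \<Rightarrow> real" where
  "spec_norm A = onorm (\<lambda>v. A *v v)"

definition gammaY :: "real \<Rightarrow> real \<Rightarrow> real^'p \<Rightarrow> real^'p \<Rightarrow> real^'p" where
  "gammaY bxy byx piX piY = (1 / (1 - bxy * byx)) *\<^sub>R (piY + bxy *\<^sub>R piX)"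

definition gammaX :: "real \<Rightarrow> real \<Rightarrow> real^'p \<Rightarrow> real^'p \<Rightarrow> real^'p" where
  "gammaX bxy byx piX piY = (1 / (1 - bxy * byx)) *\<^sub>R (piX + byx *\<^sub>R piY)"

definition V_XY :: "real^'p \<Rightarrow> real^'p \<Rightarrow> 'p set" where
  "V_XY piX piY = {j. piX $ j \<noteq> 0 \<and> piY $ j = 0}"

definition V_YX :: "real^'p \<Rightarrow> real^'p \<Rightarrow> 'p set" where
  "V_YX piX piY = {j. piY $ j \<noteq> 0 \<and> piX $ j = 0}"

definition V_pl :: "real^'p \<Rightarrow> real^'p \<Rightarrow> 'p set" where
  "V_pl piX piY = {j. piX $ j \<noteq> 0 \<and> piY $ j \<noteq> 0}"

definition supp :: "real^'p \<Rightarrow> 'p set" where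
  "supp g = {j. g $ j \<noteq> 0}"

text \<open>max over c of |{j in A. f j = c}|, with max over the empty collection = 0
  (values c outside f ` A contribute 0).\<close>
definition max_level :: "('p \<Rightarrow> real) \<Rightarrow> 'p set \<Rightarrow> nat" where
  "max_level f A = Max ({0} \<union> (\<lambda>c. card {j \<in> A. f j = c}) ` (f ` A))"

definition ind :: "bool \<Rightarrow> nat" where
  "ind b = (if b then 1 else 0)"

definition cov_vec :: "'a measure \<Rightarrow> ('a \<Rightarrow> real) \<Rightarrow> ('a \<Rightarrow> real^'p) \<Rightarrow> real^'p" where
  "cov_vec M W Z = (\<chi> j. (\<integral>\<omega>. W \<omega> * Z \<omega> $ j \<partial>M) - (\<integral>\<omega>. W \<omega> \<partial>M) * (\<integral>\<omega>. Z \<omega> $ j \<partial>M))"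

definition cond_exp3 :: "'a measure \<Rightarrow> 'u measure \<Rightarrow> ('a \<Rightarrow> real) \<Rightarrow> ('a \<Rightarrow> real^'p)
    \<Rightarrow> ('a \<Rightarrow> 'u) \<Rightarrow> ('a \<Rightarrow> real) \<Rightarrow> ('a \<Rightarrow> real)" where
  "cond_exp3 M N e Z U f =
     real_cond_exp M (vimage_algebra (space M) (\<lambda>\<omega>. (e \<omega>, Z \<omega>, U \<omega>))
        (borel \<Otimes>\<^sub>M borel \<Otimes>\<^sub>M N)) f"

definition sem_model ::
  "'a measure \<Rightarrow> 'u measure \<Rightarrow> ('a \<Rightarrow> real) \<Rightarrow> ('a \<Rightarrow> real) \<Rightarrow> ('a \<Rightarrow> real^'p) \<Rightarrow> ('a \<Rightarrow> 'u)
   \<Rightarrow> ('a \<Rightarrow> real) \<Rightarrow> ('a \<Rightarrow> real) \<Rightarrow> ('u \<Rightarrow> real) \<Rightarrow> ('u \<Rightarrow> real)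
   \<Rightarrow> real \<Rightarrow> real \<Rightarrow> real^'p \<Rightarrow> real^'p \<Rightarrow> bool" where
  "sem_model M N X Y Z U zeta eta xiY xiX bxy byx piX piY \<longleftrightarrow>
     prob_space M \<and>
     X \<in> borel_measurable M \<and> Y \<in> borel_measurable M \<and> Z \<in> borel_measurable M \<and>
     U \<in> measurable M N \<and> zeta \<in> borel_measurable M \<and> eta \<in> borel_measurable M \<and>
     xiY \<in> borel_measurable N \<and> xiX \<in> borel_measurable N \<and>
     integrable M (\<lambda>\<omega>. (X \<omega>)\<^sup>2) \<and> integrable M (\<lambda>\<omega>. (Y \<omega>)\<^sup>2) \<and>
     (\<integral>\<omega>. X \<omega> \<partial>M) = 0 \<and> (\<integral>\<omega>. Y \<omega> \<partial>M) = 0 \<and>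
     (\<forall>j. integrable M (\<lambda>\<omega>. (Z \<omega> $ j)\<^sup>2) \<and> (\<integral>\<omega>. Z \<omega> $ j \<partial>M) = 0) \<and>
     invertible (\<chi> j k. \<integral>\<omega>. Z \<omega> $ j * Z \<omega> $ k \<partial>M) \<and>
     (AE \<omega> in M. Y \<omega> = bxy * X \<omega> + piY \<bullet> Z \<omega> + xiY (U \<omega>) + zeta \<omega>) \<and>
     (AE \<omega> in M. X \<omega> = byx * Y \<omega> + piX \<bullet> Z \<omega> + xiX (U \<omega>) + eta \<omega>) \<and>
     integrable M (\<lambda>\<omega>. xiY (U \<omega>)) \<and> (\<integral>\<omega>. xiY (U \<omega>) \<partial>M) = 0 \<and>
     integrable M (\<lambda>\<omega>. xiX (U \<omega>)) \<and> (\<integral>\<omega>. xiX (U \<omega>) \<partial>M) = 0 \<and>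
     distr M (borel \<Otimes>\<^sub>M N) (\<lambda>\<omega>. (Z \<omega>, U \<omega>)) = distr M borel Z \<Otimes>\<^sub>M distr M N U \<and>
     integrable M zeta \<and> integrable M eta \<and>
     (AE \<omega> in M. cond_exp3 M N eta Z U zeta \<omega> = 0) \<and>
     (AE \<omega> in M. cond_exp3 M N zeta Z U eta \<omega> = 0) \<and>
     spec_norm (Bmat bxy byx) < 1"

definition assumption_A ::
  "'a measure \<Rightarrow> ('a \<Rightarrow> real) \<Rightarrow> ('a \<Rightarrow> real) \<Rightarrow> ('a \<Rightarrow> real^'p)
   \<Rightarrow> real \<Rightarrow> real \<Rightarrow> real^'p \<Rightarrow> real^'p \<Rightarrow> bool" where
  "assumption_A M Y RY Z bxy byx piX piY \<longleftrightarrow>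
     (let gX = gammaX bxy byx piX piY in
      card (V_XY piX piY) >
        max (max_level (\<lambda>j. piY $ j / gX $ j) (V_pl piX piY \<inter> supp gX))
          (max (card (V_YX piX piY) * ind (byx \<noteq> 0))
               (card (V_pl piX piY - supp gX) * ind (byx \<noteq> 0)))) \<and>
     cov_vec M (\<lambda>\<omega>. Y \<omega> * RY \<omega>) Z \<noteq> 0"

definition assumption_A' ::
  "'a measure \<Rightarrow> ('a \<Rightarrow> real) \<Rightarrow> ('a \<Rightarrow> real) \<Rightarrow> ('a \<Rightarrow> real^'p)
   \<Rightarrow> real \<Rightarrow> real \<Rightarrow> real^'p \<Rightarrow> real^'p \<Rightarrow> bool" where
  "assumption_A' M X RX Z bxy byx piX piY \<longleftrightarrow>
     (let gY = gammaY bxy byx piX piY in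
      card (V_YX piX piY) >
        max (max_level (\<lambda>j. piX $ j / gY $ j) (V_pl piX piY \<inter> supp gY))
          (max (card (V_XY piX piY) * ind (bxy \<noteq> 0))
               (card (V_pl piX piY - supp gY) * ind (bxy \<noteq> 0)))) \<and>
     cov_vec M (\<lambda>\<omega>. X \<omega> * RX \<omega>) Z \<noteq> 0"

definition admissible ::
  "'a measure \<Rightarrow> 'u measure \<Rightarrow> ('a \<Rightarrow> real) \<Rightarrow> ('a \<Rightarrow> real) \<Rightarrow> ('a \<Rightarrow> real^'p) \<Rightarrow> ('a \<Rightarrow> 'u)
   \<Rightarrow> ('a \<Rightarrow> real) \<Rightarrow> ('a \<Rightarrow> real) \<Rightarrow> ('u \<Rightarrow> real) \<Rightarrow> ('u \<Rightarrow> real)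
   \<Rightarrow> real \<Rightarrow> real \<Rightarrow> real^'p \<Rightarrow> real^'p \<Rightarrow> bool" where
  "admissible M N X Y Z U zeta eta xiY xiX bxy byx piX piY \<longleftrightarrow>
     sem_model M N X Y Z U zeta eta xiY xiX bxy byx piX piY \<and>
     (assumption_A M Y (\<lambda>\<omega>. xiY (U \<omega>) + zeta \<omega>) Z bxy byx piX piY \<or>
      assumption_A' M X (\<lambda>\<omega>. xiX (U \<omega>) + eta \<omega>) Z bxy byx piX piY) \<and>
     bxy * byx = 0"

end

theory Submission
  imports Defs
begin

text \<open>When \<open>b c = 0\<close>, the reduced-form coefficients \<open>\<gamma>\<^sub>X\<close>, \<open>\<gamma>\<^sub>Y\<close> are the \<open>L\<^sup>2\<close> projection
  coefficients of \<open>X\<close> and \<open>Y\<close> on \<open>Z\<close>, hence functions of the law of \<open>(X, Y, Z)\<close>, and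
  \<open>\<pi>\<^sub>X = \<gamma>\<^sub>X - c \<gamma>\<^sub>Y\<close>, \<open>\<pi>\<^sub>Y = \<gamma>\<^sub>Y - b \<gamma>\<^sub>X\<close>. In terms of the reduced-form residuals the structural
  errors are \<open>R\<^sub>X = e\<^sub>X - c e\<^sub>Y\<close> and \<open>R\<^sub>Y = e\<^sub>Y - b e\<^sub>X\<close>, and \<open>R\<^sub>X R\<^sub>Y\<close> has constant conditional
  mean given \<open>Z\<close>. So \<open>(-b, 1, -c)\<close> lies in the linear space \<open>Q\<close> of quadratic forms in \<open>(e\<^sub>X, e\<^sub>Y)\<close>
  with constant conditional mean given \<open>Z\<close>, again a function of the law, while the covariance
  conditions of Assumptions A and A' keep \<open>(0, -b, 1)\<close>, resp. \<open>(1, -c, 0)\<close>, out of \<open>Q\<close>.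

  Two parameter pairs with the same law and both effects from \<open>X\<close> to \<open>Y\<close> would put \<open>(1, 0, 0)\<close>
  into \<open>Q\<close>, so both satisfy Assumption A, which makes \<open>b\<close> the strict mode of the ratios
  \<open>\<gamma>\<^sub>Y\<^sub>j / \<gamma>\<^sub>X\<^sub>j\<close>; a strict mode is unique. The case of effects from \<open>Y\<close> to \<open>X\<close> is symmetric, and
  effects in opposite directions are impossible, because the plurality conditions of the two
  models give opposite strict inequalities between the sizes of four classes of instruments.\<close>

section \<open>The plurality rule\<close>

definition plurality_rule :: "real \<Rightarrow> real \<Rightarrow> real^'p \<Rightarrow> real^'p \<Rightarrow> bool" where
  "plurality_rule bxy byx piX piY \<longleftrightarrow>
     (let gX = gammaX bxy byx piX piY in
      card (V_XY piX piY) >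
        max (max_level (\<lambda>j. piY $ j / gX $ j) (V_pl piX piY \<inter> supp gX))
          (max (card (V_YX piX piY) * ind (byx \<noteq> 0))
               (card (V_pl piX piY - supp gX) * ind (byx \<noteq> 0))))"

lemma assumption_A_iff:
  "assumption_A M Y RY Z bxy byx piX piY \<longleftrightarrow>
     plurality_rule bxy byx piX piY \<and> cov_vec M (\<lambda>\<omega>. Y \<omega> * RY \<omega>) Z \<noteq> 0"
  unfolding assumption_A_def plurality_rule_def by simp

lemma gammaX_swap: "gammaX byx bxy piY piX = gammaY bxy byx piX piY"
  unfolding gammaX_def gammaY_def by (simp add: mult.commute)

lemma gammaY_swap: "gammaY byx bxy piY piX = gammaX bxy byx piX piY"
  unfolding gammaX_def gammaY_def by (simp add: mult.commute)

lemma assumption_A'_iff: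
  "assumption_A' M X RX Z bxy byx piX piY \<longleftrightarrow>
     plurality_rule byx bxy piY piX \<and> cov_vec M (\<lambda>\<omega>. X \<omega> * RX \<omega>) Z \<noteq> 0"
proof -
  have "V_YX piX piY = V_XY piY piX" "V_XY piX piY = V_YX piY piX" "V_pl piX piY = V_pl piY piX"
    unfolding V_YX_def V_XY_def V_pl_def by auto
  then show ?thesis
    unfolding assumption_A'_def plurality_rule_def gammaX_swap by simp
qed

lemma card_le_max_level:
  fixes f :: "'p::finite \<Rightarrow> real"
  assumes "T \<subseteq> A" and "\<And>j. j \<in> T \<Longrightarrow> f j = v"
  shows "card T \<le> max_level f A"
proof (cases "T = {}")
  case False
  then obtain j where "j \<in> T" by auto
  have "card T \<le> card {j \<in> A. f j = v}"
    by (rule card_mono) (use assms in auto)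
  also have "\<dots> \<le> max_level f A"
    unfolding max_level_def by (rule Max_ge) (use \<open>j \<in> T\<close> assms in force)+
  finally show ?thesis .
qed simp

lemma plurality_rule_level_less:
  assumes "plurality_rule bxy byx piX piY"
    and "\<And>j. j \<in> T \<Longrightarrow> piX $ j \<noteq> 0 \<and> gammaX bxy byx piX piY $ j \<noteq> 0 \<and>
                        piY $ j = v * gammaX bxy byx piX piY $ j"
    and "v \<noteq> 0"
  shows "card T < card (V_XY piX piY)"
proof -
  let ?g = "gammaX bxy byx piX piY"
  have "card T \<le> max_level (\<lambda>j. piY $ j / ?g $ j) (V_pl piX piY \<inter> supp ?g)"
    by (rule card_le_max_level) (use assms(2,3) in \<open>auto simp: V_pl_def supp_def\<close>)
  then show ?thesis
    using assms(1) unfolding plurality_rule_def Let_def by linarith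
qed

lemma plurality_rule_unsupported_less:
  assumes "plurality_rule bxy byx piX piY" and "byx \<noteq> 0"
  shows "card (V_pl piX piY - supp (gammaX bxy byx piX piY)) < card (V_XY piX piY)"
  using assms unfolding plurality_rule_def Let_def ind_def by simp

lemma gammaX_one_way: "gammaX bxy 0 piX piY = piX"
  unfolding gammaX_def by simp

lemma gammaX_reverse: "gammaX 0 byx piX piY = piX + byx *\<^sub>R piY"
  unfolding gammaX_def by simp

lemma plurality_rule_one_way_less:
  fixes g k :: "real^'p"
  assumes "plurality_rule b 0 g (k - b *\<^sub>R g)" and "b' \<noteq> b"
  shows "card (V_XY g (k - b' *\<^sub>R g)) < card (V_XY g (k - b *\<^sub>R g))"
  using assms
  by (intro plurality_rule_level_less[where v = "b' - b"])
     (auto simp: V_XY_def gammaX_one_way algebra_simps)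

text \<open>In a model with no effect of \<open>Y\<close> on \<open>X\<close>, the plurality rule says that \<open>b\<close> is the strict
  mode of the ratios \<open>k $ j / g $ j\<close> of the reduced-form coefficients; a strict mode is unique.\<close>
lemma plurality_rule_one_way_unique:
  fixes g k :: "real^'p"
  assumes "plurality_rule b 0 g (k - b *\<^sub>R g)" and "plurality_rule b' 0 g (k - b' *\<^sub>R g)"
  shows "b = b'"
  using plurality_rule_one_way_less[OF assms(1)] plurality_rule_one_way_less[OF assms(2)]
  by (metis less_not_sym)

lemma plurality_rule_opposite_cards:
  fixes g k :: "real^'p"
  assumes b: "b \<noteq> 0" and c: "c \<noteq> 0" and bc: "b * c \<noteq> 1"
    and rule: "plurality_rule b 0 g (k - b *\<^sub>R g) \<or> plurality_rule 0 b (k - b *\<^sub>R g) g"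
  defines "P \<equiv> {j. g $ j \<noteq> 0 \<and> k $ j = b * g $ j}" and "Q \<equiv> {j. g $ j \<noteq> 0 \<and> k $ j = 0}"
    and "R \<equiv> {j. k $ j \<noteq> 0 \<and> g $ j = c * k $ j}" and "S \<equiv> {j. k $ j \<noteq> 0 \<and> g $ j = 0}"
  shows "card Q < card P \<and> card R < card P \<or> card Q < card S \<and> card R < card S"
proof -
  have R_nonzero: "k $ j - b * g $ j \<noteq> 0" if "j \<in> R" for j
  proof -
    from that have "k $ j \<noteq> 0" and "k $ j - b * g $ j = k $ j * (1 - b * c)"
      by (auto simp: R_def algebra_simps)
    with bc show ?thesis by simp
  qed
  from rule show ?thesis
  proof
    assume rule_XY: "plurality_rule b 0 g (k - b *\<^sub>R g)"
    have "V_XY g (k - b *\<^sub>R g) = P" by (auto simp: V_XY_def P_def)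
    moreover have "card Q < card (V_XY g (k - b *\<^sub>R g))"
      by (rule plurality_rule_level_less[OF rule_XY, where v = "- b"])
         (use b in \<open>auto simp: Q_def gammaX_one_way\<close>)
    moreover have "card R < card (V_XY g (k - b *\<^sub>R g))"
      by (rule plurality_rule_level_less[OF rule_XY, where v = "1 / c - b"])
         (use b c bc R_nonzero in \<open>auto simp: R_def gammaX_one_way field_simps\<close>)
    ultimately show ?thesis by simp
  next
    assume rule_YX: "plurality_rule 0 b (k - b *\<^sub>R g) g"
    have gamma: "gammaX 0 b (k - b *\<^sub>R g) g = k" by (simp add: gammaX_reverse)
    have "V_XY (k - b *\<^sub>R g) g = S" by (auto simp: V_XY_def S_def)
    moreover have "V_pl (k - b *\<^sub>R g) g - supp k = Q"
      using b by (auto simp: V_pl_def supp_def Q_def)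
    moreover note plurality_rule_unsupported_less[OF rule_YX b, unfolded gamma]
    moreover have "card R < card (V_XY (k - b *\<^sub>R g) g)"
      by (rule plurality_rule_level_less[OF rule_YX, where v = c])
         (use c R_nonzero in \<open>auto simp: R_def gamma\<close>)
    ultimately show ?thesis by simp
  qed
qed

text \<open>\<open>g\<close> and \<open>k\<close> play the role of the reduced-form coefficients \<open>\<gamma>\<^sub>X\<close> and \<open>\<gamma>\<^sub>Y\<close>, from which
  \<open>\<pi>\<^sub>X = g - c k\<close> and \<open>\<pi>\<^sub>Y = k - b g\<close> are recovered when \<open>b c = 0\<close>. A triple \<open>(\<alpha>, \<beta>, \<gamma>)\<close> stands for
  the quadratic form \<open>\<alpha> e\<^sub>X\<^sup>2 + \<beta> e\<^sub>X e\<^sub>Y + \<gamma> e\<^sub>Y\<^sup>2\<close> in the reduced-form residuals; \<open>(-b, 1, -c)\<close> is the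
  product of the structural errors, and the forms \<open>(0, -b, 1)\<close> and \<open>(1, -c, 0)\<close> are those whose
  membership in \<open>Q\<close> would contradict the covariance conditions of Assumptions A and A'.\<close>
definition candidate_effects ::
  "(real \<times> real \<times> real) set \<Rightarrow> real^'p \<Rightarrow> real^'p \<Rightarrow> real \<Rightarrow> real \<Rightarrow> bool" where
  "candidate_effects Q g k b c \<longleftrightarrow>
     b * c = 0 \<and> \<bar>b\<bar> < 1 \<and> \<bar>c\<bar> < 1 \<and> (- b, 1, - c) \<in> Q \<and>
     (plurality_rule b c (g - c *\<^sub>R k) (k - b *\<^sub>R g) \<and> (0, - b, 1) \<notin> Q \<or>
      plurality_rule c b (k - b *\<^sub>R g) (g - c *\<^sub>R k) \<and> (1, - c, 0) \<notin> Q)"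

lemma subspace_diff_scale:
  assumes "subspace Q" and "u \<in> Q" and "v \<in> Q" and "u - v = t *\<^sub>R w" and "t \<noteq> 0"
  shows "w \<in> Q"
proof -
  have "inverse t *\<^sub>R (u - v) \<in> Q"
    using assms(1-3) by (intro subspace_scale subspace_diff)
  with assms(4,5) show ?thesis by simp
qed

lemma candidate_effects_one_way_unique:
  assumes "subspace Q" and "candidate_effects Q g k b 0" and "candidate_effects Q g k b' 0"
  shows "b = b'"
proof (rule ccontr)
  assume "b \<noteq> b'"
  have "(1, 0, 0) \<in> Q"
    by (rule subspace_diff_scale[OF assms(1), of "(- b, 1, 0)" "(- b', 1, 0)" "b' - b"])
       (use assms(2,3) \<open>b \<noteq> b'\<close> in \<open>auto simp: candidate_effects_def zero_prod_def\<close>)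
  then have "plurality_rule b 0 g (k - b *\<^sub>R g)" and "plurality_rule b' 0 g (k - b' *\<^sub>R g)"
    using assms(2,3) by (auto simp: candidate_effects_def)
  with \<open>b \<noteq> b'\<close> show False
    using plurality_rule_one_way_unique by blast
qed

lemma candidate_effects_reverse_unique:
  assumes "subspace Q" and "candidate_effects Q g k 0 c" and "candidate_effects Q g k 0 c'"
  shows "c = c'"
proof (rule ccontr)
  assume "c \<noteq> c'"
  have "(0, 0, 1) \<in> Q"
    by (rule subspace_diff_scale[OF assms(1), of "(0, 1, - c)" "(0, 1, - c')" "c' - c"])
       (use assms(2,3) \<open>c \<noteq> c'\<close> in \<open>auto simp: candidate_effects_def zero_prod_def\<close>)
  then have "plurality_rule c 0 k (g - c *\<^sub>R k)" and "plurality_rule c' 0 k (g - c' *\<^sub>R k)"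
    using assms(2,3) by (auto simp: candidate_effects_def)
  with \<open>c \<noteq> c'\<close> show False
    using plurality_rule_one_way_unique by blast
qed

text \<open>The two alternatives of \<open>plurality_rule_opposite_cards\<close>, read once for \<open>(g, k, b)\<close> and once
  for \<open>(k, g, c)\<close>, give opposite strict inequalities between the same cardinalities.\<close>
lemma candidate_effects_opposite:
  assumes "candidate_effects Q g k b 0" and "candidate_effects Q g k 0 c"
  shows "b = 0 \<or> c = 0"
proof (rule ccontr)
  assume "\<not> (b = 0 \<or> c = 0)"
  then have "b \<noteq> 0" "c \<noteq> 0" by auto
  have "\<bar>b\<bar> * \<bar>c\<bar> < 1 * 1"
    using assms by (intro abs_mult_less) (auto simp: candidate_effects_def)
  then have "\<bar>b * c\<bar> < 1" by (simp add: abs_mult)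
  then have "b * c \<noteq> 1" and "c * b \<noteq> 1" by (auto simp: mult.commute)
  have "plurality_rule b 0 g (k - b *\<^sub>R g) \<or> plurality_rule 0 b (k - b *\<^sub>R g) g"
    and "plurality_rule c 0 k (g - c *\<^sub>R k) \<or> plurality_rule 0 c (g - c *\<^sub>R k) k"
    using assms by (auto simp: candidate_effects_def)
  from plurality_rule_opposite_cards[OF \<open>b \<noteq> 0\<close> \<open>c \<noteq> 0\<close> \<open>b * c \<noteq> 1\<close> this(1)]
    plurality_rule_opposite_cards[OF \<open>c \<noteq> 0\<close> \<open>b \<noteq> 0\<close> \<open>c * b \<noteq> 1\<close> this(2)]
  show False by auto
qed

lemma candidate_effects_unique:
  assumes "subspace Q" and "candidate_effects Q g k b c" and "candidate_effects Q g k b' c'"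
  shows "b = b' \<and> c = c'"
proof -
  have "b = 0 \<or> c = 0" and "b' = 0 \<or> c' = 0"
    using assms(2,3) by (auto simp: candidate_effects_def)
  moreover have "b = 0 \<or> c' = 0" if "c = 0" "b' = 0"
    using candidate_effects_opposite assms(2,3) that by blast
  moreover have "b' = 0 \<or> c = 0" if "b = 0" "c' = 0"
    using candidate_effects_opposite assms(2,3) that by blast
  moreover have "b = b'" if "c = 0" "c' = 0"
    using candidate_effects_one_way_unique assms that by blast
  moreover have "c = c'" if "b = 0" "b' = 0"
    using candidate_effects_reverse_unique assms that by blast
  ultimately show ?thesis by metis
qed

section \<open>Square integrability, conditional expectation and independence\<close>

definition square_integrable :: "'a measure \<Rightarrow> ('a \<Rightarrow> real) \<Rightarrow> bool" where
  "square_integrable M f \<longleftrightarrow> f \<in> borel_measurable M \<and> integrable M (\<lambda>x. (f x)\<^sup>2)"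

lemma square_integrable_measurable: "square_integrable M f \<Longrightarrow> f \<in> borel_measurable M"
  unfolding square_integrable_def by simp

lemma (in finite_measure) square_integrable_integrable: "square_integrable M f \<Longrightarrow> integrable M f"
  unfolding square_integrable_def by (auto intro: square_integrable_imp_integrable)

lemma integrable_mult_square_integrable:
  assumes "square_integrable M f" and "square_integrable M g"
  shows "integrable M (\<lambda>x. f x * g x)"
proof (rule Bochner_Integration.integrable_bound)
  show "integrable M (\<lambda>x. (f x)\<^sup>2 + (g x)\<^sup>2)"
    using assms unfolding square_integrable_def by auto
  show "(\<lambda>x. f x * g x) \<in> borel_measurable M"
    using assms unfolding square_integrable_def by auto
  have "\<bar>f x * g x\<bar> \<le> (f x)\<^sup>2 + (g x)\<^sup>2" for x
  proof -
    have "2 * \<bar>f x\<bar> * \<bar>g x\<bar> \<le> (f x)\<^sup>2 + (g x)\<^sup>2"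
      using sum_squares_bound[of "\<bar>f x\<bar>" "\<bar>g x\<bar>"] by simp
    moreover have "0 \<le> \<bar>f x\<bar> * \<bar>g x\<bar>" by simp
    ultimately show ?thesis unfolding abs_mult by linarith
  qed
  then show "AE x in M. norm (f x * g x) \<le> norm ((f x)\<^sup>2 + (g x)\<^sup>2)"
    by simp
qed

lemma square_integrable_add:
  assumes "square_integrable M f" and "square_integrable M g"
  shows "square_integrable M (\<lambda>x. f x + g x)"
proof -
  have "integrable M (\<lambda>x. (f x)\<^sup>2 + (g x)\<^sup>2 + 2 * f x * g x)"
    using assms integrable_mult_square_integrable[OF assms]
    unfolding square_integrable_def by (auto simp: mult.assoc)
  then show ?thesis
    using assms unfolding square_integrable_def by (simp add: power2_sum borel_measurable_add)
qed

lemma square_integrable_cmult: "square_integrable M f \<Longrightarrow> square_integrable M (\<lambda>x. c * f x)"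
  unfolding square_integrable_def power_mult_distrib by (simp add: borel_measurable_times)

lemma square_integrable_diff:
  "square_integrable M f \<Longrightarrow> square_integrable M g \<Longrightarrow> square_integrable M (\<lambda>x. f x - g x)"
  using square_integrable_add[of M f "\<lambda>x. (- 1) * g x"] square_integrable_cmult[of M g "- 1"]
  by simp

lemma square_integrable_sum:
  "finite I \<Longrightarrow> (\<And>i. i \<in> I \<Longrightarrow> square_integrable M (f i)) \<Longrightarrow>
    square_integrable M (\<lambda>x. \<Sum>i\<in>I. f i x)"
proof (induction I rule: finite_induct)
  case empty
  then show ?case by (simp add: square_integrable_def)
next
  case (insert i I)
  then show ?case by (simp add: square_integrable_add)
qed

lemma square_integrable_mult_bounded:
  assumes f: "square_integrable M f" and h: "h \<in> borel_measurable M" and bound: "\<And>x. \<bar>h x\<bar> \<le> B"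
  shows "square_integrable M (\<lambda>x. f x * h x)"
proof -
  have fh: "(\<lambda>x. f x * h x) \<in> borel_measurable M"
    using f h unfolding square_integrable_def by (simp add: borel_measurable_times)
  have "(f x * h x)\<^sup>2 \<le> B\<^sup>2 * (f x)\<^sup>2" for x
  proof -
    have "(h x)\<^sup>2 \<le> B\<^sup>2"
      using power_mono[OF bound[of x], of 2] by simp
    then have "(f x)\<^sup>2 * (h x)\<^sup>2 \<le> (f x)\<^sup>2 * B\<^sup>2"
      by (rule mult_left_mono) simp
    then show ?thesis
      by (simp only: power_mult_distrib mult.commute)
  qed
  then have bound_sq: "AE x in M. norm ((f x * h x)\<^sup>2) \<le> norm (B\<^sup>2 * (f x)\<^sup>2)"
    by (intro AE_I2) simp
  have "integrable M (\<lambda>x. (f x * h x)\<^sup>2)"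
  proof (rule Bochner_Integration.integrable_bound)
    show "integrable M (\<lambda>x. B\<^sup>2 * (f x)\<^sup>2)"
      using f unfolding square_integrable_def by simp
    show "(\<lambda>x. (f x * h x)\<^sup>2) \<in> borel_measurable M"
      using fh by measurable
  qed (fact bound_sq)
  with fh show ?thesis
    unfolding square_integrable_def by simp
qed

lemma square_integrable_cong_AE:
  assumes "square_integrable M f" and "g \<in> borel_measurable M" and "AE x in M. f x = g x"
  shows "square_integrable M g"
proof -
  have "AE x in M. (f x)\<^sup>2 = (g x)\<^sup>2" using assms(3) by auto
  then show ?thesis
    using assms integrable_cong_AE[of "\<lambda>x. (f x)\<^sup>2" M "\<lambda>x. (g x)\<^sup>2"]
    unfolding square_integrable_def by auto
qed

lemma (in prob_space) sigma_finite_subalgebra_vimage: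
  assumes "W \<in> measurable M K"
  shows "sigma_finite_subalgebra M (vimage_algebra (space M) W K)"
proof (rule finite_measure_subalgebra_is_sigma_finite)
  have "subalgebra M (vimage_algebra (space M) W K)"
    unfolding subalgebra_def using sets_image_in_sets[OF refl assms] by simp
  then show "finite_measure_subalgebra M (vimage_algebra (space M) W K)"
    unfolding finite_measure_subalgebra_def finite_measure_subalgebra_axioms_def
    using finite_measure_axioms by simp
qed

lemma measurable_vimage_algebra_comp:
  assumes "W \<in> measurable M K" and "F \<in> borel_measurable K"
  shows "(\<lambda>\<omega>. F (W \<omega>)) \<in> borel_measurable (vimage_algebra (space M) W K)"
proof -
  have "W \<in> measurable (vimage_algebra (space M) W K) K"
    using assms(1) by (intro measurable_vimage_algebra1) (auto simp: measurable_def)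
  from measurable_comp[OF this assms(2)] show ?thesis
    by (simp add: comp_def)
qed

lemma (in prob_space) integral_mult_eq_0_if_cond_exp_eq_0:
  assumes W: "W \<in> measurable M K"
    and cond_exp: "AE \<omega> in M. real_cond_exp M (vimage_algebra (space M) W K) z \<omega> = 0"
    and z: "z \<in> borel_measurable M" and F: "F \<in> borel_measurable K"
    and int: "integrable M (\<lambda>\<omega>. F (W \<omega>) * z \<omega>)"
  shows "(\<integral>\<omega>. F (W \<omega>) * z \<omega> \<partial>M) = 0"
proof -
  let ?G = "vimage_algebra (space M) W K"
  interpret G: sigma_finite_subalgebra M ?G
    using sigma_finite_subalgebra_vimage[OF W] .
  have FW: "(\<lambda>\<omega>. F (W \<omega>)) \<in> borel_measurable ?G"
    using measurable_vimage_algebra_comp[OF W F] .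
  have "(\<integral>\<omega>. F (W \<omega>) * z \<omega> \<partial>M) = (\<integral>\<omega>. F (W \<omega>) * real_cond_exp M ?G z \<omega> \<partial>M)"
    using G.real_cond_exp_intg(2)[OF int FW z] by simp
  also have "\<dots> = 0"
    using cond_exp by (auto intro!: integral_eq_zero_AE elim!: eventually_mono)
  finally show ?thesis .
qed

text \<open>Since \<open>E[z | W] = 0\<close>, \<open>E[R | W] = V(W)\<close>, and conditional Jensen bounds \<open>V(W)\<^sup>2\<close> by \<open>E[R\<^sup>2 | W]\<close>.\<close>
lemma (in prob_space) square_integrable_if_cond_exp_eq_0:
  assumes W: "W \<in> measurable M K"
    and cond_exp: "AE \<omega> in M. real_cond_exp M (vimage_algebra (space M) W K) z \<omega> = 0"
    and z: "integrable M z" and V: "V \<in> borel_measurable K" and VW: "integrable M (\<lambda>\<omega>. V (W \<omega>))"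
    and R: "square_integrable M R" and R_eq: "AE \<omega> in M. R \<omega> = V (W \<omega>) + z \<omega>"
  shows "square_integrable M (\<lambda>\<omega>. V (W \<omega>))" and "square_integrable M z"
proof -
  let ?G = "vimage_algebra (space M) W K"
  interpret G: sigma_finite_subalgebra M ?G
    using sigma_finite_subalgebra_vimage[OF W] .
  have VW_G: "(\<lambda>\<omega>. V (W \<omega>)) \<in> borel_measurable ?G"
    using measurable_vimage_algebra_comp[OF W V] .
  have VW_M: "(\<lambda>\<omega>. V (W \<omega>)) \<in> borel_measurable M"
    using measurable_from_subalg[OF G.subalg VW_G] .
  have R_M: "R \<in> borel_measurable M"
    using R by (rule square_integrable_measurable)
  have R_int: "integrable M R"
    using R by (rule square_integrable_integrable)
  have z_M: "z \<in> borel_measurable M"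
    using z by (rule borel_measurable_integrable)
  have "AE \<omega> in M. real_cond_exp M ?G R \<omega> = real_cond_exp M ?G (\<lambda>\<omega>. V (W \<omega>) + z \<omega>) \<omega>"
    using R_eq R_M by (rule G.real_cond_exp_cong) (use VW_M z_M in measurable)
  moreover have "AE \<omega> in M. real_cond_exp M ?G (\<lambda>\<omega>. V (W \<omega>) + z \<omega>) \<omega>
                   = real_cond_exp M ?G (\<lambda>\<omega>. V (W \<omega>)) \<omega> + real_cond_exp M ?G z \<omega>"
    using VW z by (rule G.real_cond_exp_add)
  moreover have "AE \<omega> in M. real_cond_exp M ?G (\<lambda>\<omega>. V (W \<omega>)) \<omega> = V (W \<omega>)"
    using VW VW_G by (rule G.real_cond_exp_F_meas)
  moreover have "AE \<omega> in M. (real_cond_exp M ?G R \<omega>)\<^sup>2 \<le> real_cond_exp M ?G (\<lambda>\<omega>. (R \<omega>)\<^sup>2) \<omega>"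
    using G.real_cond_exp_jensens_inequality(2)[of R UNIV _ _ power2] R_int R convex_power2
    unfolding square_integrable_def by auto
  ultimately have bound: "AE \<omega> in M. (V (W \<omega>))\<^sup>2 \<le> real_cond_exp M ?G (\<lambda>\<omega>. (R \<omega>)\<^sup>2) \<omega>"
    using cond_exp by eventually_elim simp
  show VW_sq: "square_integrable M (\<lambda>\<omega>. V (W \<omega>))"
    unfolding square_integrable_def
  proof
    show "integrable M (\<lambda>\<omega>. (V (W \<omega>))\<^sup>2)"
    proof (rule Bochner_Integration.integrable_bound)
      show "integrable M (real_cond_exp M ?G (\<lambda>\<omega>. (R \<omega>)\<^sup>2))"
        using R unfolding square_integrable_def by (intro G.real_cond_exp_int(1)) simp
      show "AE \<omega> in M. norm ((V (W \<omega>))\<^sup>2) \<le> norm (real_cond_exp M ?G (\<lambda>\<omega>. (R \<omega>)\<^sup>2) \<omega>)"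
        using bound by eventually_elim simp
    qed (use VW_M in measurable)
  qed (fact VW_M)
  show "square_integrable M z"
    using square_integrable_diff[OF R VW_sq] z_M
    by (rule square_integrable_cong_AE) (use R_eq in auto)
qed

lemma (in prob_space) integral_mult_indep:
  fixes g :: "'z::{second_countable_topology, topological_space} \<Rightarrow> real" and f :: "'u \<Rightarrow> real"
  assumes Z: "Z \<in> borel_measurable M" and U: "U \<in> measurable M N"
    and indep: "distr M (borel \<Otimes>\<^sub>M N) (\<lambda>\<omega>. (Z \<omega>, U \<omega>)) = distr M borel Z \<Otimes>\<^sub>M distr M N U"
    and g: "g \<in> borel_measurable borel" and f: "f \<in> borel_measurable N"
    and "integrable M (\<lambda>\<omega>. g (Z \<omega>))" and "integrable M (\<lambda>\<omega>. f (U \<omega>))"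
  shows "integrable M (\<lambda>\<omega>. g (Z \<omega>) * f (U \<omega>))"
    and "(\<integral>\<omega>. g (Z \<omega>) * f (U \<omega>) \<partial>M) = (\<integral>\<omega>. g (Z \<omega>) \<partial>M) * (\<integral>\<omega>. f (U \<omega>) \<partial>M)"
proof -
  have "distr M (borel \<Otimes>\<^sub>M borel) (\<lambda>\<omega>. (g (Z \<omega>), f (U \<omega>)))
      = distr (distr M (borel \<Otimes>\<^sub>M N) (\<lambda>\<omega>. (Z \<omega>, U \<omega>))) (borel \<Otimes>\<^sub>M borel) (\<lambda>(x, y). (g x, f y))"
    using Z U g f by (subst distr_distr) (auto simp: comp_def)
  also have "\<dots> = distr (distr M borel Z) borel g \<Otimes>\<^sub>M distr (distr M N U) borel f"
    unfolding indep using Z U g f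
    by (intro pair_measure_distr[symmetric] prob_space_imp_sigma_finite
          prob_space.prob_space_distr[OF prob_space_distr]) auto
  also have "\<dots> = distr M borel (\<lambda>\<omega>. g (Z \<omega>)) \<Otimes>\<^sub>M distr M borel (\<lambda>\<omega>. f (U \<omega>))"
    using Z U g f by (simp add: distr_distr comp_def)
  finally have indep_gf: "indep_var borel (\<lambda>\<omega>. g (Z \<omega>)) borel (\<lambda>\<omega>. f (U \<omega>))"
    using Z U g f by (subst indep_var_distribution_eq) auto
  show "integrable M (\<lambda>\<omega>. g (Z \<omega>) * f (U \<omega>))"
    using indep_var_integrable[OF indep_gf assms(6,7)] .
  show "(\<integral>\<omega>. g (Z \<omega>) * f (U \<omega>) \<partial>M) = (\<integral>\<omega>. g (Z \<omega>) \<partial>M) * (\<integral>\<omega>. f (U \<omega>) \<partial>M)"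
    using indep_var_lebesgue_integral[OF indep_gf assms(6,7)] .
qed

lemma (in prob_space) cov_vec_eq_0_if_cond_mean_const:
  fixes Z :: "'a \<Rightarrow> real^'p"
  assumes Z [measurable]: "Z \<in> borel_measurable M"
    and Z_int: "\<And>j. integrable M (\<lambda>\<omega>. Z \<omega> $ j)" and Z_mean: "\<And>j. (\<integral>\<omega>. Z \<omega> $ j \<partial>M) = 0"
    and W [measurable]: "W \<in> borel_measurable M"
    and cond_mean: "\<And>h. h \<in> borel_measurable borel \<Longrightarrow> bounded (range h) \<Longrightarrow>
                      (\<integral>\<omega>. W \<omega> * h (Z \<omega>) \<partial>M) = \<kappa> * (\<integral>\<omega>. h (Z \<omega>) \<partial>M)"
  shows "cov_vec M W Z = 0"
proof -
  have "(\<integral>\<omega>. W \<omega> * Z \<omega> $ j \<partial>M) = 0" for j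
  proof (cases "integrable M (\<lambda>\<omega>. W \<omega> * Z \<omega> $ j)")
    case True
    text \<open>Approximate \<open>z $ j\<close> by its truncations, to which the hypothesis applies.\<close>
    define h where "h n z = (if \<bar>z $ j\<bar> \<le> real n then z $ j else 0)" for n :: nat and z :: "real^'p"
    have h_measurable [measurable]: "h n \<in> borel_measurable borel" for n
      unfolding h_def by measurable
    have h_bounded: "bounded (range (h n))" for n
      unfolding bounded_real h_def by (intro exI[of _ "real n"]) auto
    have h_le: "\<bar>h n z\<bar> \<le> \<bar>z $ j\<bar>" for n z
      unfolding h_def by auto
    have h_lim: "(\<lambda>n. h n z) \<longlonglongrightarrow> z $ j" for z
    proof (rule tendsto_eventually)
      obtain n0 :: nat where "\<bar>z $ j\<bar> \<le> real n0"
        using real_arch_simple by blast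
      then show "eventually (\<lambda>n. h n z = z $ j) sequentially"
        unfolding eventually_sequentially h_def by (intro exI[of _ n0]) auto
    qed
    have "(\<lambda>n. \<integral>\<omega>. W \<omega> * h n (Z \<omega>) \<partial>M) \<longlonglongrightarrow> (\<integral>\<omega>. W \<omega> * Z \<omega> $ j \<partial>M)"
    proof (rule integral_dominated_convergence[where w = "\<lambda>\<omega>. \<bar>W \<omega> * Z \<omega> $ j\<bar>"])
      show "AE \<omega> in M. norm (W \<omega> * h n (Z \<omega>)) \<le> \<bar>W \<omega> * Z \<omega> $ j\<bar>" for n
        by (intro AE_I2) (simp add: abs_mult mult_left_mono h_le)
      show "AE \<omega> in M. (\<lambda>n. W \<omega> * h n (Z \<omega>)) \<longlonglongrightarrow> W \<omega> * Z \<omega> $ j"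
        by (intro AE_I2 tendsto_mult_left h_lim)
    qed (use True in auto)
    moreover have "(\<lambda>n. \<integral>\<omega>. h n (Z \<omega>) \<partial>M) \<longlonglongrightarrow> (\<integral>\<omega>. Z \<omega> $ j \<partial>M)"
    proof (rule integral_dominated_convergence[where w = "\<lambda>\<omega>. \<bar>Z \<omega> $ j\<bar>"])
      show "AE \<omega> in M. norm (h n (Z \<omega>)) \<le> \<bar>Z \<omega> $ j\<bar>" for n
        by (intro AE_I2) (simp add: h_le)
    qed (use Z_int h_lim in auto)
    then have "(\<lambda>n. \<integral>\<omega>. W \<omega> * h n (Z \<omega>) \<partial>M) \<longlonglongrightarrow> \<kappa> * 0"
      unfolding cond_mean[OF h_measurable h_bounded] Z_mean by (rule tendsto_mult_left)
    ultimately show ?thesis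
      using LIMSEQ_unique by fastforce
  qed (simp add: not_integrable_integral_eq)
  then show ?thesis
    unfolding cov_vec_def by (simp add: Z_mean vec_eq_iff)
qed

section \<open>Quadratic forms with constant conditional mean\<close>

text \<open>The triple \<open>(\<alpha>, \<beta>, \<gamma>)\<close> stands for the quadratic form \<open>\<alpha> e\<^sub>X\<^sup>2 + \<beta> e\<^sub>X e\<^sub>Y + \<gamma> e\<^sub>Y\<^sup>2\<close> in the
  residuals \<open>e\<^sub>X = x - g \<bullet> z\<close>, \<open>e\<^sub>Y = y - k \<bullet> z\<close>; it belongs to the set when the conditional mean of
  the form given \<open>z\<close> is constant, tested against bounded \<open>h\<close> so that all integrals are finite.\<close>
definition cond_const_forms ::
  "(real \<times> real \<times> (real^'p)) measure \<Rightarrow> real^'p \<Rightarrow> real^'p \<Rightarrow> (real \<times> real \<times> real) set" where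
  "cond_const_forms P g k = {(\<alpha>, \<beta>, \<gamma>). \<exists>\<kappa>. \<forall>h \<in> borel_measurable borel. bounded (range h) \<longrightarrow>
      \<alpha> * (\<integral>(x, y, z). (x - g \<bullet> z)\<^sup>2 * h z \<partial>P)
      + \<beta> * (\<integral>(x, y, z). (x - g \<bullet> z) * (y - k \<bullet> z) * h z \<partial>P)
      + \<gamma> * (\<integral>(x, y, z). (y - k \<bullet> z)\<^sup>2 * h z \<partial>P) = \<kappa> * (\<integral>(x, y, z). h z \<partial>P)}"

lemma subspace_cond_const_forms:
  fixes g k :: "real^'p"
  shows "subspace (cond_const_forms P g k)"
proof -
  define form where "form \<alpha> \<beta> \<gamma> h =
      \<alpha> * (\<integral>(x, y, z). (x - g \<bullet> z)\<^sup>2 * h z \<partial>P)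
      + \<beta> * (\<integral>(x, y, z). (x - g \<bullet> z) * (y - k \<bullet> z) * h z \<partial>P)
      + \<gamma> * (\<integral>(x, y, z). (y - k \<bullet> z)\<^sup>2 * h z \<partial>P)" for \<alpha> \<beta> \<gamma> and h :: "real^'p \<Rightarrow> real"
  define H :: "(real^'p \<Rightarrow> real) set" where "H = {h \<in> borel_measurable borel. bounded (range h)}"
  have mem: "(\<alpha>, \<beta>, \<gamma>) \<in> cond_const_forms P g k \<longleftrightarrow>
      (\<exists>\<kappa>. \<forall>h \<in> H. form \<alpha> \<beta> \<gamma> h = \<kappa> * (\<integral>(x, y, z). h z \<partial>P))" for \<alpha> \<beta> \<gamma>
    unfolding cond_const_forms_def form_def H_def by auto
  have add: "form (\<alpha> + \<alpha>') (\<beta> + \<beta>') (\<gamma> + \<gamma>') h = form \<alpha> \<beta> \<gamma> h + form \<alpha>' \<beta>' \<gamma>' h"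
    and scale: "form (t * \<alpha>) (t * \<beta>) (t * \<gamma>) h = t * form \<alpha> \<beta> \<gamma> h" for \<alpha> \<beta> \<gamma> \<alpha>' \<beta>' \<gamma>' t h
    unfolding form_def by (simp_all add: algebra_simps)
  show ?thesis
    unfolding subspace_def
  proof safe
    show "0 \<in> cond_const_forms P g k"
      unfolding zero_prod_def mem by (auto simp: form_def)
  next
    fix \<alpha> \<beta> \<gamma> \<alpha>' \<beta>' \<gamma>'
    assume "(\<alpha>, \<beta>, \<gamma>) \<in> cond_const_forms P g k" "(\<alpha>', \<beta>', \<gamma>') \<in> cond_const_forms P g k"
    then obtain \<kappa> \<kappa>' where "\<forall>h \<in> H. form \<alpha> \<beta> \<gamma> h = \<kappa> * (\<integral>(x, y, z). h z \<partial>P)"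
      and "\<forall>h \<in> H. form \<alpha>' \<beta>' \<gamma>' h = \<kappa>' * (\<integral>(x, y, z). h z \<partial>P)"
      unfolding mem by blast
    then have "(\<alpha> + \<alpha>', \<beta> + \<beta>', \<gamma> + \<gamma>') \<in> cond_const_forms P g k"
      unfolding mem by (intro exI[of _ "\<kappa> + \<kappa>'"]) (simp add: add distrib_right)
    then show "(\<alpha>, \<beta>, \<gamma>) + (\<alpha>', \<beta>', \<gamma>') \<in> cond_const_forms P g k"
      by simp
  next
    fix t \<alpha> \<beta> \<gamma>
    assume "(\<alpha>, \<beta>, \<gamma>) \<in> cond_const_forms P g k"
    then obtain \<kappa> where "\<forall>h \<in> H. form \<alpha> \<beta> \<gamma> h = \<kappa> * (\<integral>(x, y, z). h z \<partial>P)"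
      unfolding mem by blast
    then have "(t * \<alpha>, t * \<beta>, t * \<gamma>) \<in> cond_const_forms P g k"
      unfolding mem by (intro exI[of _ "t * \<kappa>"]) (simp add: scale)
    then show "t *\<^sub>R (\<alpha>, \<beta>, \<gamma>) \<in> cond_const_forms P g k"
      by simp
  qed
qed

section \<open>The linear structural model\<close>

lemma abs_less_1_if_spec_norm_Bmat_less_1:
  assumes "spec_norm (Bmat b c) < 1"
  shows "\<bar>b\<bar> < 1" and "\<bar>c\<bar> < 1"
proof -
  let ?B = "Bmat b c"
  have "\<bar>(?B *v v) $ i\<bar> < 1" if "norm v = 1" for v i
  proof -
    have "\<bar>(?B *v v) $ i\<bar> \<le> norm (?B *v v)"
      by (rule component_le_norm_cart)
    also have "\<dots> \<le> onorm (\<lambda>v. ?B *v v) * norm v"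
      by (rule onorm) simp
    finally show ?thesis
      using assms that by (simp add: spec_norm_def)
  qed
  moreover have "(?B *v axis 2 1) $ 1 = b" and "(?B *v axis 1 1) $ 2 = c"
    unfolding Bmat_def matrix_vector_mult_def axis_def by (simp_all add: sum_2 vector_2)
  ultimately show "\<bar>b\<bar> < 1" and "\<bar>c\<bar> < 1"
    by (metis norm_axis_1)+
qed

lemma gammaX_minus_gammaY:
  "bxy * byx = 0 \<Longrightarrow> gammaX bxy byx piX piY - byx *\<^sub>R gammaY bxy byx piX piY = piX"
  unfolding gammaX_def gammaY_def by (auto simp: algebra_simps)

lemma gammaY_minus_gammaX:
  "bxy * byx = 0 \<Longrightarrow> gammaY bxy byx piX piY - bxy *\<^sub>R gammaX bxy byx piX piY = piY"
  unfolding gammaX_def gammaY_def by (auto simp: algebra_simps)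

text \<open>The hypotheses of \<open>sem_model\<close> together with \<open>b c = 0\<close>, with the spectral-norm condition
  replaced by its consequences \<open>\<bar>b\<bar> < 1\<close>, \<open>\<bar>c\<bar> < 1\<close>, and stated symmetrically in \<open>X\<close> and \<open>Y\<close>.\<close>
locale linear_sem =
  fixes M :: "'a measure" and N :: "'u measure"
    and X Y :: "'a \<Rightarrow> real" and Z :: "'a \<Rightarrow> real^'p" and U :: "'a \<Rightarrow> 'u"
    and zeta eta :: "'a \<Rightarrow> real" and xiY xiX :: "'u \<Rightarrow> real"
    and b c :: real and piX piY :: "real^'p"
  assumes prob_space: "prob_space M"
    and X_square_integrable: "square_integrable M X"
    and Y_square_integrable: "square_integrable M Y"
    and Z_measurable [measurable]: "Z \<in> borel_measurable M"
    and Z_square_integrable: "\<And>j. square_integrable M (\<lambda>\<omega>. Z \<omega> $ j)"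
    and Z_mean: "\<And>j. (\<integral>\<omega>. Z \<omega> $ j \<partial>M) = 0"
    and Z_second_moment_invertible: "invertible (\<chi> j k. \<integral>\<omega>. Z \<omega> $ j * Z \<omega> $ k \<partial>M)"
    and U_measurable [measurable]: "U \<in> measurable M N"
    and zeta_measurable [measurable]: "zeta \<in> borel_measurable M"
    and eta_measurable [measurable]: "eta \<in> borel_measurable M"
    and xiY_measurable [measurable]: "xiY \<in> borel_measurable N"
    and xiX_measurable [measurable]: "xiX \<in> borel_measurable N"
    and Y_equation: "AE \<omega> in M. Y \<omega> = b * X \<omega> + piY \<bullet> Z \<omega> + xiY (U \<omega>) + zeta \<omega>"
    and X_equation: "AE \<omega> in M. X \<omega> = c * Y \<omega> + piX \<bullet> Z \<omega> + xiX (U \<omega>) + eta \<omega>"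
    and xiY_integrable: "integrable M (\<lambda>\<omega>. xiY (U \<omega>))"
    and xiX_integrable: "integrable M (\<lambda>\<omega>. xiX (U \<omega>))"
    and xiY_mean: "(\<integral>\<omega>. xiY (U \<omega>) \<partial>M) = 0"
    and xiX_mean: "(\<integral>\<omega>. xiX (U \<omega>) \<partial>M) = 0"
    and Z_U_indep: "distr M (borel \<Otimes>\<^sub>M N) (\<lambda>\<omega>. (Z \<omega>, U \<omega>)) = distr M borel Z \<Otimes>\<^sub>M distr M N U"
    and zeta_integrable: "integrable M zeta"
    and eta_integrable: "integrable M eta"
    and zeta_cond_mean: "AE \<omega> in M. cond_exp3 M N eta Z U zeta \<omega> = 0"
    and eta_cond_mean: "AE \<omega> in M. cond_exp3 M N zeta Z U eta \<omega> = 0"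
    and one_way: "b * c = 0"
    and b_bound: "\<bar>b\<bar> < 1"
    and c_bound: "\<bar>c\<bar> < 1"

lemma linear_sem_if_sem_model:
  assumes "sem_model M N X Y Z U zeta eta xiY xiX b c piX piY" and "b * c = 0"
  shows "linear_sem M N X Y Z U zeta eta xiY xiX b c piX piY"
proof -
  have "(\<lambda>\<omega>. Z \<omega> $ j) \<in> borel_measurable M" for j
    using assms(1) measurable_compose[OF _ borel_measurable_nth, of Z M]
    unfolding sem_model_def by simp
  then show ?thesis
    using assms abs_less_1_if_spec_norm_Bmat_less_1[of b c]
    unfolding sem_model_def linear_sem_def square_integrable_def by auto
qed

sublocale linear_sem \<subseteq> prob_space M
  by (fact prob_space)

text \<open>Exchanging the roles of \<open>X\<close> and \<open>Y\<close> gives another model of the same kind, so every result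
  below also holds in its mirrored form, under the prefix \<open>swap\<close>. Such a self-interpretation
  exports a fact only once the context is reopened, which is why the development below is split
  into several \<open>context\<close> blocks. The interpretation as a probability space comes first so that
  its facts keep their unqualified names.\<close>
sublocale linear_sem \<subseteq> swap: linear_sem M N Y X Z U eta zeta xiX xiY c b piY piX
  by (rule linear_sem.intro)
     (simp_all add: prob_space X_square_integrable Y_square_integrable Z_square_integrable Z_mean
       Z_second_moment_invertible X_equation Y_equation xiX_integrable xiY_integrable xiX_mean
       xiY_mean Z_U_indep zeta_integrable eta_integrable zeta_cond_mean eta_cond_mean
       one_way[unfolded mult.commute[of b]] b_bound c_bound)

context linear_sem
begin

lemmas swap_gammas = gammaX_swap[of c b piY piX] gammaY_swap[of c b piY piX]

lemma X_measurable [measurable]: "X \<in> borel_measurable M"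
  using X_square_integrable by (rule square_integrable_measurable)

lemma Y_measurable [measurable]: "Y \<in> borel_measurable M"
  using Y_square_integrable by (rule square_integrable_measurable)

lemma Z_component_measurable [measurable]: "(\<lambda>\<omega>. Z \<omega> $ j) \<in> borel_measurable M"
  using Z_square_integrable by (rule square_integrable_measurable)

lemma inner_Z_square_integrable: "square_integrable M (\<lambda>\<omega>. v \<bullet> Z \<omega>)"
  using square_integrable_sum[of UNIV M "\<lambda>k \<omega>. v $ k * Z \<omega> $ k"]
  by (simp add: inner_vec_def square_integrable_cmult Z_square_integrable)

lemma inner_Z_measurable [measurable]: "(\<lambda>\<omega>. v \<bullet> Z \<omega>) \<in> borel_measurable M"
  using inner_Z_square_integrable by (rule square_integrable_measurable)

lemma Y_error_square_integrable: "square_integrable M (\<lambda>\<omega>. xiY (U \<omega>) + zeta \<omega>)"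
proof (rule square_integrable_cong_AE)
  show "square_integrable M (\<lambda>\<omega>. Y \<omega> - b * X \<omega> - piY \<bullet> Z \<omega>)"
    by (intro square_integrable_diff square_integrable_cmult X_square_integrable
        Y_square_integrable inner_Z_square_integrable)
  show "AE \<omega> in M. Y \<omega> - b * X \<omega> - piY \<bullet> Z \<omega> = xiY (U \<omega>) + zeta \<omega>"
    using Y_equation by eventually_elim simp
qed measurable

lemma zeta_orthogonal:
  assumes "F \<in> borel_measurable (borel \<Otimes>\<^sub>M borel \<Otimes>\<^sub>M N)"
    and "integrable M (\<lambda>\<omega>. F (eta \<omega>, Z \<omega>, U \<omega>) * zeta \<omega>)"
  shows "(\<integral>\<omega>. F (eta \<omega>, Z \<omega>, U \<omega>) * zeta \<omega> \<partial>M) = 0"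
  using zeta_cond_mean assms unfolding cond_exp3_def
  by (intro integral_mult_eq_0_if_cond_exp_eq_0) simp_all

lemma xiY_square_integrable: "square_integrable M (\<lambda>\<omega>. xiY (U \<omega>))"
  and zeta_square_integrable: "square_integrable M zeta"
  using square_integrable_if_cond_exp_eq_0[of "\<lambda>\<omega>. (eta \<omega>, Z \<omega>, U \<omega>)" "borel \<Otimes>\<^sub>M borel \<Otimes>\<^sub>M N"
      zeta "\<lambda>t. xiY (snd (snd t))" "\<lambda>\<omega>. xiY (U \<omega>) + zeta \<omega>"]
    zeta_cond_mean zeta_integrable xiY_integrable Y_error_square_integrable
  unfolding cond_exp3_def by simp_all

lemma Y_error_orthogonal:
  assumes g: "g \<in> borel_measurable borel" and g_sq: "square_integrable M (\<lambda>\<omega>. g (Z \<omega>))"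
  shows "integrable M (\<lambda>\<omega>. (xiY (U \<omega>) + zeta \<omega>) * g (Z \<omega>))"
    and "(\<integral>\<omega>. (xiY (U \<omega>) + zeta \<omega>) * g (Z \<omega>) \<partial>M) = 0"
proof -
  have xiY_int: "integrable M (\<lambda>\<omega>. g (Z \<omega>) * xiY (U \<omega>))"
    and xiY_0: "(\<integral>\<omega>. g (Z \<omega>) * xiY (U \<omega>) \<partial>M) = 0"
    using integral_mult_indep[OF Z_measurable U_measurable Z_U_indep g xiY_measurable
        square_integrable_integrable[OF g_sq] xiY_integrable] xiY_mean
    by simp_all
  have zeta_int: "integrable M (\<lambda>\<omega>. g (Z \<omega>) * zeta \<omega>)"
    using g_sq zeta_square_integrable by (rule integrable_mult_square_integrable)
  then have zeta_0: "(\<integral>\<omega>. g (Z \<omega>) * zeta \<omega> \<partial>M) = 0"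
    using zeta_orthogonal[of "\<lambda>t. g (fst (snd t))"] g by simp
  have split: "(\<lambda>\<omega>. (xiY (U \<omega>) + zeta \<omega>) * g (Z \<omega>))
      = (\<lambda>\<omega>. g (Z \<omega>) * xiY (U \<omega>) + g (Z \<omega>) * zeta \<omega>)"
    by (simp add: fun_eq_iff algebra_simps)
  show "integrable M (\<lambda>\<omega>. (xiY (U \<omega>) + zeta \<omega>) * g (Z \<omega>))"
    unfolding split using xiY_int zeta_int by simp
  show "(\<integral>\<omega>. (xiY (U \<omega>) + zeta \<omega>) * g (Z \<omega>) \<partial>M) = 0"
    unfolding split using xiY_int zeta_int xiY_0 zeta_0 by simp
qed

lemma Y_error_eq_residuals:
  "AE \<omega> in M. xiY (U \<omega>) + zeta \<omega>
     = (Y \<omega> - gammaY b c piX piY \<bullet> Z \<omega>) - b * (X \<omega> - gammaX b c piX piY \<bullet> Z \<omega>)"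
proof -
  have pi: "piY \<bullet> z = gammaY b c piX piY \<bullet> z - b * (gammaX b c piX piY \<bullet> z)" for z
    by (metis gammaY_minus_gammaX[OF one_way] inner_diff_left inner_scaleR_left)
  from Y_equation show ?thesis
  proof eventually_elim
    case (elim \<omega>)
    then show ?case
      using pi[of "Z \<omega>"] by (simp add: algebra_simps)
  qed
qed

lemma orthogonal_coefficients_unique:
  assumes W: "square_integrable M W"
    and v: "\<And>j. (\<integral>\<omega>. Z \<omega> $ j * (W \<omega> - v \<bullet> Z \<omega>) \<partial>M) = 0"
    and u: "\<And>j. (\<integral>\<omega>. Z \<omega> $ j * (W \<omega> - u \<bullet> Z \<omega>) \<partial>M) = 0"
  shows "v = u"
proof -
  let ?\<Sigma> = "\<chi> j k. \<integral>\<omega>. Z \<omega> $ j * Z \<omega> $ k \<partial>M"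
  have "(?\<Sigma> *v (u - v)) $ j = 0" for j
  proof -
    have ZZ: "integrable M (\<lambda>\<omega>. Z \<omega> $ j * Z \<omega> $ k)" for k
      using Z_square_integrable Z_square_integrable by (rule integrable_mult_square_integrable)
    have ZW: "integrable M (\<lambda>\<omega>. Z \<omega> $ j * (W \<omega> - w \<bullet> Z \<omega>))" for w
      using Z_square_integrable square_integrable_diff[OF W inner_Z_square_integrable]
      by (rule integrable_mult_square_integrable)
    have "(?\<Sigma> *v (u - v)) $ j = (\<integral>\<omega>. (\<Sum>k\<in>UNIV. (u - v) $ k * (Z \<omega> $ j * Z \<omega> $ k)) \<partial>M)"
      using ZZ by (simp add: matrix_vector_mult_def mult.commute)
    also have "\<dots> = (\<integral>\<omega>. Z \<omega> $ j * (W \<omega> - v \<bullet> Z \<omega>) - Z \<omega> $ j * (W \<omega> - u \<bullet> Z \<omega>) \<partial>M)"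
      by (rule Bochner_Integration.integral_cong)
         (simp_all add: inner_vec_def algebra_simps sum_distrib_left sum_subtractf)
    also have "\<dots> = 0"
      using ZW v u by simp
    finally show ?thesis .
  qed
  then have "?\<Sigma> *v (u - v) = ?\<Sigma> *v 0"
    by (simp add: vec_eq_iff)
  with inj_matrix_vector_mult[OF Z_second_moment_invertible] have "u - v = 0"
    by (rule injD)
  then show ?thesis
    by simp
qed

lemma residual_square_integrable:
  "square_integrable M (\<lambda>\<omega>. X \<omega> - g \<bullet> Z \<omega>)" "square_integrable M (\<lambda>\<omega>. Y \<omega> - g \<bullet> Z \<omega>)"
  by (intro square_integrable_diff X_square_integrable Y_square_integrable inner_Z_square_integrable)+

lemma integrable_mult_mult_bounded:
  assumes f: "square_integrable M f" and f': "square_integrable M f'"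
    and h: "h \<in> borel_measurable borel" and bound: "\<And>z. \<bar>h z\<bar> \<le> B"
  shows "integrable M (\<lambda>\<omega>. f \<omega> * f' \<omega> * h (Z \<omega>))"
proof -
  have "(\<lambda>\<omega>. h (Z \<omega>)) \<in> borel_measurable M"
    using h by measurable
  from integrable_mult_square_integrable[OF f square_integrable_mult_bounded[OF f' this bound]]
  show ?thesis
    by (simp add: mult.assoc)
qed

end

context linear_sem
begin

text \<open>Conditionally on \<open>Z\<close>, the product of the two structural errors has the constant mean
  \<open>E[\<xi>\<^sub>X \<xi>\<^sub>Y]\<close>: every term involving \<open>\<zeta>\<close> or \<open>\<eta>\<close> vanishes by the conditional mean conditions,
  and \<open>U\<close> is independent of \<open>Z\<close>.\<close>
lemma errors_product_cond_mean:
  assumes h: "h \<in> borel_measurable borel" and bound: "\<And>z. \<bar>h z\<bar> \<le> B"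
  shows "(\<integral>\<omega>. (xiX (U \<omega>) + eta \<omega>) * (xiY (U \<omega>) + zeta \<omega>) * h (Z \<omega>) \<partial>M)
       = (\<integral>\<omega>. xiX (U \<omega>) * xiY (U \<omega>) \<partial>M) * (\<integral>\<omega>. h (Z \<omega>) \<partial>M)"
proof -
  have hZ: "(\<lambda>\<omega>. h (Z \<omega>)) \<in> borel_measurable M"
    using h by measurable
  have hZ_int: "integrable M (\<lambda>\<omega>. h (Z \<omega>))"
    using bound hZ by (intro integrable_const_bound[where B = B]) simp_all
  have RX_h: "square_integrable M (\<lambda>\<omega>. (xiX (U \<omega>) + eta \<omega>) * h (Z \<omega>))"
    using swap.Y_error_square_integrable hZ bound by (rule square_integrable_mult_bounded)
  have xiY_h: "square_integrable M (\<lambda>\<omega>. xiY (U \<omega>) * h (Z \<omega>))"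
    using xiY_square_integrable hZ bound by (rule square_integrable_mult_bounded)
  have int1: "integrable M (\<lambda>\<omega>. h (Z \<omega>) * (xiX (U \<omega>) * xiY (U \<omega>)))"
    and eq1: "(\<integral>\<omega>. h (Z \<omega>) * (xiX (U \<omega>) * xiY (U \<omega>)) \<partial>M)
              = (\<integral>\<omega>. h (Z \<omega>) \<partial>M) * (\<integral>\<omega>. xiX (U \<omega>) * xiY (U \<omega>) \<partial>M)"
    using integral_mult_indep[OF Z_measurable U_measurable Z_U_indep h _ hZ_int,
        of "\<lambda>u. xiX u * xiY u"]
      integrable_mult_square_integrable[OF swap.xiY_square_integrable xiY_square_integrable]
    by simp_all
  have int2: "integrable M (\<lambda>\<omega>. xiY (U \<omega>) * h (Z \<omega>) * eta \<omega>)"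
    using xiY_h swap.zeta_square_integrable by (rule integrable_mult_square_integrable)
  then have eq2: "(\<integral>\<omega>. xiY (U \<omega>) * h (Z \<omega>) * eta \<omega> \<partial>M) = 0"
    using swap.zeta_orthogonal[of "\<lambda>t. xiY (snd (snd t)) * h (fst (snd t))"] h by simp
  have int3: "integrable M (\<lambda>\<omega>. (xiX (U \<omega>) + eta \<omega>) * h (Z \<omega>) * zeta \<omega>)"
    using RX_h zeta_square_integrable by (rule integrable_mult_square_integrable)
  then have eq3: "(\<integral>\<omega>. (xiX (U \<omega>) + eta \<omega>) * h (Z \<omega>) * zeta \<omega> \<partial>M) = 0"
    using zeta_orthogonal[of "\<lambda>t. (xiX (snd (snd t)) + fst t) * h (fst (snd t))"] h by simp
  have "(\<lambda>\<omega>. (xiX (U \<omega>) + eta \<omega>) * (xiY (U \<omega>) + zeta \<omega>) * h (Z \<omega>))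
      = (\<lambda>\<omega>. h (Z \<omega>) * (xiX (U \<omega>) * xiY (U \<omega>)) + xiY (U \<omega>) * h (Z \<omega>) * eta \<omega>
              + (xiX (U \<omega>) + eta \<omega>) * h (Z \<omega>) * zeta \<omega>)"
    by (simp add: fun_eq_iff algebra_simps)
  then show ?thesis
    using int1 int2 int3 eq1 eq2 eq3 by simp
qed

lemma Y_residual_eq_errors:
  "AE \<omega> in M. Y \<omega> - gammaY b c piX piY \<bullet> Z \<omega>
     = (xiY (U \<omega>) + zeta \<omega>) + b * (xiX (U \<omega>) + eta \<omega>)"
  using Y_error_eq_residuals swap.Y_error_eq_residuals[unfolded swap_gammas]
proof eventually_elim
  case (elim \<omega>)
  let ?eX = "X \<omega> - gammaX b c piX piY \<bullet> Z \<omega>" and ?eY = "Y \<omega> - gammaY b c piX piY \<bullet> Z \<omega>"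
  have "(xiY (U \<omega>) + zeta \<omega>) + b * (xiX (U \<omega>) + eta \<omega>) = ?eY - (b * c) * ?eY"
    unfolding elim by (simp add: algebra_simps)
  then show ?case
    using one_way by simp
qed

lemma Y_reduced_form_orthogonal: "(\<integral>\<omega>. Z \<omega> $ j * (Y \<omega> - gammaY b c piX piY \<bullet> Z \<omega>) \<partial>M) = 0"
proof -
  have g: "(\<lambda>z::real^'p. z $ j) \<in> borel_measurable borel"
    by measurable
  note RY = Y_error_orthogonal[OF g Z_square_integrable]
    and RX = swap.Y_error_orthogonal[OF g Z_square_integrable]
  have "(\<integral>\<omega>. Z \<omega> $ j * (Y \<omega> - gammaY b c piX piY \<bullet> Z \<omega>) \<partial>M)
      = (\<integral>\<omega>. (xiY (U \<omega>) + zeta \<omega>) * Z \<omega> $ j + b * ((xiX (U \<omega>) + eta \<omega>) * Z \<omega> $ j) \<partial>M)"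
    using Y_residual_eq_errors by (intro integral_cong_AE) (auto simp: algebra_simps elim!: eventually_mono)
  also have "\<dots> = 0"
    using RY RX by simp
  finally show ?thesis .
qed

lemma Y_reduced_form_iff:
  "(\<forall>j. (\<integral>\<omega>. Z \<omega> $ j * (Y \<omega> - v \<bullet> Z \<omega>) \<partial>M) = 0) \<longleftrightarrow> v = gammaY b c piX piY"
  using orthogonal_coefficients_unique[OF Y_square_integrable] Y_reduced_form_orthogonal by blast

definition law :: "(real \<times> real \<times> (real^'p)) measure" where
  "law = distr M (borel \<Otimes>\<^sub>M borel \<Otimes>\<^sub>M borel) (\<lambda>\<omega>. (X \<omega>, Y \<omega>, Z \<omega>))"

lemma integral_law:
  fixes F :: "real \<times> real \<times> (real^'p) \<Rightarrow> real"
  assumes "F \<in> borel_measurable (borel \<Otimes>\<^sub>M borel \<Otimes>\<^sub>M borel)"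
  shows "(\<integral>t. F t \<partial>law) = (\<integral>\<omega>. F (X \<omega>, Y \<omega>, Z \<omega>) \<partial>M)"
proof -
  have "(\<lambda>\<omega>. (X \<omega>, Y \<omega>, Z \<omega>)) \<in> measurable M (borel \<Otimes>\<^sub>M borel \<Otimes>\<^sub>M borel)"
    by measurable
  from integral_distr[OF this assms] show ?thesis
    unfolding law_def by simp
qed

lemma mem_cond_const_forms_law:
  "(\<alpha>, \<beta>, \<gamma>) \<in> cond_const_forms law g k \<longleftrightarrow>
    (\<exists>\<kappa>. \<forall>h \<in> borel_measurable borel. bounded (range h) \<longrightarrow>
      \<alpha> * (\<integral>\<omega>. (X \<omega> - g \<bullet> Z \<omega>)\<^sup>2 * h (Z \<omega>) \<partial>M)
      + \<beta> * (\<integral>\<omega>. (X \<omega> - g \<bullet> Z \<omega>) * (Y \<omega> - k \<bullet> Z \<omega>) * h (Z \<omega>) \<partial>M)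
      + \<gamma> * (\<integral>\<omega>. (Y \<omega> - k \<bullet> Z \<omega>)\<^sup>2 * h (Z \<omega>) \<partial>M) = \<kappa> * (\<integral>\<omega>. h (Z \<omega>) \<partial>M))"
proof -
  have "(\<integral>(x, y, z). (x - g \<bullet> z)\<^sup>2 * h z \<partial>law) = (\<integral>\<omega>. (X \<omega> - g \<bullet> Z \<omega>)\<^sup>2 * h (Z \<omega>) \<partial>M)"
    and "(\<integral>(x, y, z). (x - g \<bullet> z) * (y - k \<bullet> z) * h z \<partial>law)
         = (\<integral>\<omega>. (X \<omega> - g \<bullet> Z \<omega>) * (Y \<omega> - k \<bullet> Z \<omega>) * h (Z \<omega>) \<partial>M)"
    and "(\<integral>(x, y, z). (y - k \<bullet> z)\<^sup>2 * h z \<partial>law) = (\<integral>\<omega>. (Y \<omega> - k \<bullet> Z \<omega>)\<^sup>2 * h (Z \<omega>) \<partial>M)"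
    and "(\<integral>(x, y, z). h z \<partial>law) = (\<integral>\<omega>. h (Z \<omega>) \<partial>M)"
    if [measurable]: "h \<in> borel_measurable borel" for h
    by (subst integral_law; simp)+
  then show ?thesis
    unfolding cond_const_forms_def by simp
qed


lemma error_product_in_cond_const_forms: "(- b, 1, - c) \<in> cond_const_forms law (gammaX b c piX piY) (gammaY b c piX piY)"
  unfolding mem_cond_const_forms_law
proof (intro exI[of _ "\<integral>\<omega>. xiX (U \<omega>) * xiY (U \<omega>) \<partial>M"] ballI impI)
  fix h :: "real^'p \<Rightarrow> real"
  assume h [measurable]: "h \<in> borel_measurable borel" and "bounded (range h)"
  then obtain B where bound: "\<And>z. \<bar>h z\<bar> \<le> B"
    unfolding bounded_real by auto
  let ?eX = "\<lambda>\<omega>. X \<omega> - gammaX b c piX piY \<bullet> Z \<omega>" and ?eY = "\<lambda>\<omega>. Y \<omega> - gammaY b c piX piY \<bullet> Z \<omega>"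
  note int_XX = integrable_mult_mult_bounded[OF residual_square_integrable(1) residual_square_integrable(1)
      h bound, of "gammaX b c piX piY" "gammaX b c piX piY"]
  note int_XY = integrable_mult_mult_bounded[OF residual_square_integrable(1) residual_square_integrable(2)
      h bound, of "gammaX b c piX piY" "gammaY b c piX piY"]
  note int_YY = integrable_mult_mult_bounded[OF residual_square_integrable(2) residual_square_integrable(2)
      h bound, of "gammaY b c piX piY" "gammaY b c piX piY"]
  have AE_eq: "AE \<omega> in M. (xiX (U \<omega>) + eta \<omega>) * (xiY (U \<omega>) + zeta \<omega>) * h (Z \<omega>)
      = - b * (?eX \<omega> * ?eX \<omega> * h (Z \<omega>)) + ?eX \<omega> * ?eY \<omega> * h (Z \<omega>) + - c * (?eY \<omega> * ?eY \<omega> * h (Z \<omega>))"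
    using Y_error_eq_residuals swap.Y_error_eq_residuals[unfolded swap_gammas]
  proof eventually_elim
    case (elim \<omega>)
    have "(xiX (U \<omega>) + eta \<omega>) * (xiY (U \<omega>) + zeta \<omega>)
        = - b * (?eX \<omega> * ?eX \<omega>) + ?eX \<omega> * ?eY \<omega> + - c * (?eY \<omega> * ?eY \<omega>) + (b * c) * (?eX \<omega> * ?eY \<omega>)"
      unfolding elim by (simp add: algebra_simps)
    then have product: "(xiX (U \<omega>) + eta \<omega>) * (xiY (U \<omega>) + zeta \<omega>)
        = - b * (?eX \<omega> * ?eX \<omega>) + ?eX \<omega> * ?eY \<omega> + - c * (?eY \<omega> * ?eY \<omega>)"
      using one_way by simp
    show ?case
      unfolding product by (simp add: algebra_simps)
  qed
  have "(\<integral>\<omega>. (xiX (U \<omega>) + eta \<omega>) * (xiY (U \<omega>) + zeta \<omega>) * h (Z \<omega>) \<partial>M)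
      = - b * (\<integral>\<omega>. ?eX \<omega> * ?eX \<omega> * h (Z \<omega>) \<partial>M) + (\<integral>\<omega>. ?eX \<omega> * ?eY \<omega> * h (Z \<omega>) \<partial>M)
        + - c * (\<integral>\<omega>. ?eY \<omega> * ?eY \<omega> * h (Z \<omega>) \<partial>M)"
    using int_XX int_XY int_YY by (subst integral_cong_AE[OF _ _ AE_eq]) simp_all
  then show "- b * (\<integral>\<omega>. (?eX \<omega>)\<^sup>2 * h (Z \<omega>) \<partial>M) + 1 * (\<integral>\<omega>. ?eX \<omega> * ?eY \<omega> * h (Z \<omega>) \<partial>M)
      + - c * (\<integral>\<omega>. (?eY \<omega>)\<^sup>2 * h (Z \<omega>) \<partial>M)
      = (\<integral>\<omega>. xiX (U \<omega>) * xiY (U \<omega>) \<partial>M) * (\<integral>\<omega>. h (Z \<omega>) \<partial>M)"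
    using errors_product_cond_mean[OF h bound] by (simp add: power2_eq_square)
qed

lemma cov_Y_error_eq_0_if_cond_const:
  assumes "(0, - b, 1) \<in> cond_const_forms law (gammaX b c piX piY) (gammaY b c piX piY)"
  shows "cov_vec M (\<lambda>\<omega>. Y \<omega> * (xiY (U \<omega>) + zeta \<omega>)) Z = 0"
proof -
  let ?gX = "gammaX b c piX piY" and ?gY = "gammaY b c piX piY"
  let ?eX = "\<lambda>\<omega>. X \<omega> - ?gX \<bullet> Z \<omega>" and ?eY = "\<lambda>\<omega>. Y \<omega> - ?gY \<bullet> Z \<omega>"
  obtain \<kappa> where \<kappa>: "\<And>h. h \<in> borel_measurable borel \<Longrightarrow> bounded (range h) \<Longrightarrow>
      - b * (\<integral>\<omega>. ?eX \<omega> * ?eY \<omega> * h (Z \<omega>) \<partial>M) + (\<integral>\<omega>. ?eY \<omega> * ?eY \<omega> * h (Z \<omega>) \<partial>M)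
      = \<kappa> * (\<integral>\<omega>. h (Z \<omega>) \<partial>M)"
    using assms unfolding mem_cond_const_forms_law by (auto simp: power2_eq_square)
  show ?thesis
  proof (rule cov_vec_eq_0_if_cond_mean_const[OF Z_measurable _ Z_mean])
    show "integrable M (\<lambda>\<omega>. Z \<omega> $ j)" for j
      using Z_square_integrable by (rule square_integrable_integrable)
    show "(\<lambda>\<omega>. Y \<omega> * (xiY (U \<omega>) + zeta \<omega>)) \<in> borel_measurable M"
      by measurable
  next
    fix h :: "real^'p \<Rightarrow> real"
    assume h [measurable]: "h \<in> borel_measurable borel" and "bounded (range h)"
    then obtain B where bound: "\<And>z. \<bar>h z\<bar> \<le> B"
      unfolding bounded_real by auto
    have "square_integrable M (\<lambda>\<omega>. ?gY \<bullet> Z \<omega> * h (Z \<omega>))"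
      using inner_Z_square_integrable _ bound by (rule square_integrable_mult_bounded) measurable
    then have orth: "integrable M (\<lambda>\<omega>. (xiY (U \<omega>) + zeta \<omega>) * (?gY \<bullet> Z \<omega> * h (Z \<omega>)))"
      "(\<integral>\<omega>. (xiY (U \<omega>) + zeta \<omega>) * (?gY \<bullet> Z \<omega> * h (Z \<omega>)) \<partial>M) = 0"
      using Y_error_orthogonal[of "\<lambda>z. ?gY \<bullet> z * h z"] by simp_all
    note int_XY = integrable_mult_mult_bounded[OF residual_square_integrable(1)
        residual_square_integrable(2) h bound, of ?gX ?gY]
    note int_YY = integrable_mult_mult_bounded[OF residual_square_integrable(2)
        residual_square_integrable(2) h bound, of ?gY ?gY]
    have AE_eq: "AE \<omega> in M. Y \<omega> * (xiY (U \<omega>) + zeta \<omega>) * h (Z \<omega>)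
        = (xiY (U \<omega>) + zeta \<omega>) * (?gY \<bullet> Z \<omega> * h (Z \<omega>)) + - b * (?eX \<omega> * ?eY \<omega> * h (Z \<omega>))
          + ?eY \<omega> * ?eY \<omega> * h (Z \<omega>)"
      using Y_error_eq_residuals
    proof eventually_elim
      case (elim \<omega>)
      show ?case
        unfolding elim by (simp add: algebra_simps)
    qed
    have "(\<integral>\<omega>. Y \<omega> * (xiY (U \<omega>) + zeta \<omega>) * h (Z \<omega>) \<partial>M)
        = - b * (\<integral>\<omega>. ?eX \<omega> * ?eY \<omega> * h (Z \<omega>) \<partial>M) + (\<integral>\<omega>. ?eY \<omega> * ?eY \<omega> * h (Z \<omega>) \<partial>M)"
      using orth int_XY int_YY by (subst integral_cong_AE[OF _ _ AE_eq]) simp_all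
    also have "\<dots> = \<kappa> * (\<integral>\<omega>. h (Z \<omega>) \<partial>M)"
      using \<kappa> h \<open>bounded (range h)\<close> by blast
    finally show "(\<integral>\<omega>. Y \<omega> * (xiY (U \<omega>) + zeta \<omega>) * h (Z \<omega>) \<partial>M) = \<kappa> * (\<integral>\<omega>. h (Z \<omega>) \<partial>M)" .
  qed
qed

end

context linear_sem
begin

lemma cond_const_forms_swap:
  "(\<gamma>, \<beta>, \<alpha>) \<in> cond_const_forms swap.law k g \<longleftrightarrow> (\<alpha>, \<beta>, \<gamma>) \<in> cond_const_forms law g k"
  unfolding mem_cond_const_forms_law swap.mem_cond_const_forms_law by (simp add: ac_simps)

lemma cov_X_error_eq_0_if_cond_const:
  assumes "(1, - c, 0) \<in> cond_const_forms law (gammaX b c piX piY) (gammaY b c piX piY)"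
  shows "cov_vec M (\<lambda>\<omega>. X \<omega> * (xiX (U \<omega>) + eta \<omega>)) Z = 0"
  using swap.cov_Y_error_eq_0_if_cond_const assms unfolding swap_gammas cond_const_forms_swap by simp

lemma reduced_form_iff_law:
  "v = gammaX b c piX piY \<longleftrightarrow> (\<forall>j. (\<integral>(x, y, z). z $ j * (x - v \<bullet> z) \<partial>law) = 0)"
  "v = gammaY b c piX piY \<longleftrightarrow> (\<forall>j. (\<integral>(x, y, z). z $ j * (y - v \<bullet> z) \<partial>law) = 0)"
proof -
  have "(\<integral>(x, y, z). z $ j * (x - v \<bullet> z) \<partial>law) = (\<integral>\<omega>. Z \<omega> $ j * (X \<omega> - v \<bullet> Z \<omega>) \<partial>M)" for j
    by (subst integral_law) (simp_all add: cart_eq_inner_axis)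
  moreover have "(\<integral>(x, y, z). z $ j * (y - v \<bullet> z) \<partial>law) = (\<integral>\<omega>. Z \<omega> $ j * (Y \<omega> - v \<bullet> Z \<omega>) \<partial>M)" for j
    by (subst integral_law) (simp_all add: cart_eq_inner_axis)
  ultimately show "v = gammaX b c piX piY \<longleftrightarrow> (\<forall>j. (\<integral>(x, y, z). z $ j * (x - v \<bullet> z) \<partial>law) = 0)"
    and "v = gammaY b c piX piY \<longleftrightarrow> (\<forall>j. (\<integral>(x, y, z). z $ j * (y - v \<bullet> z) \<partial>law) = 0)"
    using swap.Y_reduced_form_iff[unfolded swap_gammas] Y_reduced_form_iff by auto
qed

lemma candidate_effects_law:
  assumes "assumption_A M Y (\<lambda>\<omega>. xiY (U \<omega>) + zeta \<omega>) Z b c piX piY \<or>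
           assumption_A' M X (\<lambda>\<omega>. xiX (U \<omega>) + eta \<omega>) Z b c piX piY"
  shows "candidate_effects (cond_const_forms law (gammaX b c piX piY) (gammaY b c piX piY))
           (gammaX b c piX piY) (gammaY b c piX piY) b c"
  unfolding candidate_effects_def gammaX_minus_gammaY[OF one_way] gammaY_minus_gammaX[OF one_way]
  using assms one_way b_bound c_bound error_product_in_cond_const_forms
    cov_Y_error_eq_0_if_cond_const cov_X_error_eq_0_if_cond_const
  by (auto simp: assumption_A_iff assumption_A'_iff)

end

theorem theorem2:
  fixes M1 :: "'a measure" and N1 :: "'u measure"
    and X1 Y1 zeta1 eta1 :: "'a \<Rightarrow> real" and Z1 :: "'a \<Rightarrow> real^'p" and U1 :: "'a \<Rightarrow> 'u"
    and xiY1 xiX1 :: "'u \<Rightarrow> real"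
    and M2 :: "'b measure" and N2 :: "'v measure"
    and X2 Y2 zeta2 eta2 :: "'b \<Rightarrow> real" and Z2 :: "'b \<Rightarrow> real^'p" and U2 :: "'b \<Rightarrow> 'v"
    and xiY2 xiX2 :: "'v \<Rightarrow> real"
    and bxy1 byx1 bxy2 byx2 :: real and piX1 piY1 piX2 piY2 :: "real^'p"
  assumes "admissible M1 N1 X1 Y1 Z1 U1 zeta1 eta1 xiY1 xiX1 bxy1 byx1 piX1 piY1"
    and "admissible M2 N2 X2 Y2 Z2 U2 zeta2 eta2 xiY2 xiX2 bxy2 byx2 piX2 piY2"
    and "distr M1 (borel \<Otimes>\<^sub>M borel \<Otimes>\<^sub>M borel) (\<lambda>\<omega>. (X1 \<omega>, Y1 \<omega>, Z1 \<omega>))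
       = distr M2 (borel \<Otimes>\<^sub>M borel \<Otimes>\<^sub>M borel) (\<lambda>\<omega>. (X2 \<omega>, Y2 \<omega>, Z2 \<omega>))"
  shows "bxy1 = bxy2 \<and> byx1 = byx2"
proof -
  interpret m1: linear_sem M1 N1 X1 Y1 Z1 U1 zeta1 eta1 xiY1 xiX1 bxy1 byx1 piX1 piY1
    using assms(1) unfolding admissible_def by (blast intro: linear_sem_if_sem_model)
  interpret m2: linear_sem M2 N2 X2 Y2 Z2 U2 zeta2 eta2 xiY2 xiX2 bxy2 byx2 piX2 piY2
    using assms(2) unfolding admissible_def by (blast intro: linear_sem_if_sem_model)
  have law: "m2.law = m1.law"
    using assms(3) by (simp add: m1.law_def m2.law_def)
  let ?g = "gammaX bxy1 byx1 piX1 piY1" and ?k = "gammaY bxy1 byx1 piX1 piY1"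
  have "gammaX bxy2 byx2 piX2 piY2 = ?g" and "gammaY bxy2 byx2 piX2 piY2 = ?k"
    using m1.reduced_form_iff_law m2.reduced_form_iff_law unfolding law by blast+
  then have "candidate_effects (cond_const_forms m1.law ?g ?k) ?g ?k bxy2 byx2"
    using m2.candidate_effects_law assms(2) unfolding law admissible_def by metis
  moreover have "candidate_effects (cond_const_forms m1.law ?g ?k) ?g ?k bxy1 byx1"
    using m1.candidate_effects_law assms(1) unfolding admissible_def by blast
  ultimately show ?thesis
    using candidate_effects_unique[OF subspace_cond_const_forms] by blast
qed

end
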